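(* Let $X\in\mathbb{R}^{n\times nN}$ and $U\in\mathbb{R}^{m\times nN}$ satisfy $AX+BU=X(P\otimes I_n)$ and $X(\mathrm{e}_1\otimes I_n)=I_n$. Then $\Psi=\begin{bmatrix}X\\ Z\end{bmatrix}\in\mathbb{R}^{nN\times nN}$ is invertible, and if $(K,H,G,F)$ is the (unique) solution of $\begin{bmatrix} K & H \\ G & F \end{bmatrix}\Psi=\begin{bmatrix} U \\ V \end{bmatrix}$, then the closed-loop matrix $\mathcal{A}_{cl}=\begin{bmatrix}A+BK & BH\\ G & F\end{bmatrix}$ satisfies $\mathcal{A}_{cl}=\Psi(P\otimes I_n)\Psi^{-1}$.
   Context: $A\in\mathbb{R}^{n\times n}$, $B\in\mathbb{R}^{n\times m}$, $N\ge 2$. $\mathrm{e}_1\in\mathbb{R}^N$ is the first standard basis vector. $P\in\mathbb{R}^{N\times N}$ is the nilpotent shift matrix $P=\begin{bmatrix}0 & 0\\ I_{N-1} & 0\end{bmatrix}$. $\otimes$ is the Kronecker product. $Z=\begin{bmatrix}0_{n(N-1)\times n} & I_{n(N-1)}\end{bmatrix}$ and $V=Z(P\otimes I_n)$. $K\in\mathbb{R}^{m\times n}$, $H\in\mathbb{R}^{m\times n(N-1)}$, $G\in\mathbb{R}^{n(N-1)\times n}$, $F\in\mathbb{R}^{n(N-1)\times n(N-1)}$. *)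

theory Defs
  imports "Jordan_Normal_Form.Matrix"
begin

definition kron :: "'a :: times mat \<Rightarrow> 'a mat \<Rightarrow> 'a mat" (infixl \<open>\<otimes>\<^sub>k\<close> 70) where
  "kron M R = mat (dim_row M * dim_row R) (dim_col M * dim_col R)
     (\<lambda>(i,j). M $$ (i div dim_row R, j div dim_col R) * R $$ (i mod dim_row R, j mod dim_col R))"

definition shiftP :: "nat \<Rightarrow> real mat" where
  "shiftP N = mat N N (\<lambda>(i,j). if i = j + 1 then 1 else 0)"

definition e1 :: "nat \<Rightarrow> real mat" where
  "e1 N = mat N 1 (\<lambda>(i,j). if i = 0 then 1 else 0)"

text \<open>Z = [0_{n(N-1) x n}, I_{n(N-1)}].\<close>
definition Zmat :: "nat \<Rightarrow> nat \<Rightarrow> real mat" where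
  "Zmat n N = mat (n * (N - 1)) (n * N) (\<lambda>(i,j). if j = i + n then 1 else 0)"

definition Vmat :: "nat \<Rightarrow> nat \<Rightarrow> real mat" where
  "Vmat n N = Zmat n N * (shiftP N \<otimes>\<^sub>k 1\<^sub>m n)"

end

theory Submission
  imports Defs "Jordan_Normal_Form.Determinant"
begin

text \<open>Write \<open>S = P \<otimes> I\<^sub>n\<close>. The hypothesis \<open>X (e\<^sub>1 \<otimes> I\<^sub>n) = I\<^sub>n\<close> says that the leading
  \<open>n \<times> n\<close> block of \<open>X\<close> is the identity, and \<open>Z\<close> is the identity on the remaining
  coordinates, so \<open>\<Psi> = [X; Z]\<close> is upper unitriangular and hence invertible.
  Multiplying the block equation \<open>[K H; G F] \<Psi> = [U; V]\<close> out gives \<open>KX + HZ = U\<close> and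
  \<open>GX + FZ = ZS\<close>; together with \<open>AX + BU = XS\<close> this yields \<open>\<A>\<^sub>c\<^sub>l \<Psi> = \<Psi> S\<close>,
  i.e. \<open>\<A>\<^sub>c\<^sub>l = \<Psi> S \<Psi>\<^sup>-\<^sup>1\<close>.\<close>

lemma carrier_kron:
  assumes "M \<in> carrier_mat a b" "R \<in> carrier_mat c d"
  shows "M \<otimes>\<^sub>k R \<in> carrier_mat (a * c) (b * d)"
  using assms unfolding kron_def by auto

lemma index_kron:
  assumes "M \<in> carrier_mat a b" "R \<in> carrier_mat c d" "i < a * c" "j < b * d"
  shows "(M \<otimes>\<^sub>k R) $$ (i, j) = M $$ (i div c, j div d) * R $$ (i mod c, j mod d)"
  using assms unfolding kron_def by auto

lemma index_append_rows:
  assumes "A \<in> carrier_mat r1 c" "B \<in> carrier_mat r2 c" "i < r1 + r2" "j < c"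
  shows "(A @\<^sub>r B) $$ (i, j) = (if i < r1 then A $$ (i, j) else B $$ (i - r1, j))"
  using assms unfolding append_rows_def by auto

lemma append_rows_inject:
  assumes "A \<in> carrier_mat r1 c" "B \<in> carrier_mat r2 c"
    and "C \<in> carrier_mat r1 c" "D \<in> carrier_mat r2 c"
    and "A @\<^sub>r B = C @\<^sub>r D"
  shows "A = C \<and> B = D"
proof
  show "A = C"
  proof (rule eq_matI)
    fix i j assume "i < dim_row C" "j < dim_col C"
    then show "A $$ (i, j) = C $$ (i, j)"
      using assms index_append_rows[of A r1 c B r2 i j] index_append_rows[of C r1 c D r2 i j] by auto
  qed (use assms in auto)
  show "B = D"
  proof (rule eq_matI)
    fix i j assume "i < dim_row D" "j < dim_col D"
    then show "B $$ (i, j) = D $$ (i, j)"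
      using assms index_append_rows[of A r1 c B r2 "i + r1" j]
        index_append_rows[of C r1 c D r2 "i + r1" j] by auto
  qed (use assms in auto)
qed

lemma append_rows_mult:
  assumes "X \<in> carrier_mat r1 c" "Z \<in> carrier_mat r2 c" "S \<in> carrier_mat c d"
  shows "(X @\<^sub>r Z) * S = (X * S) @\<^sub>r (Z * S)"
proof -
  have XZ: "dim_row (X @\<^sub>r Z) = r1 + r2" "dim_col (X @\<^sub>r Z) = c"
    using carrier_append_rows[OF assms(1,2)] by auto
  have XSZS: "dim_row ((X * S) @\<^sub>r (Z * S)) = r1 + r2" "dim_col ((X * S) @\<^sub>r (Z * S)) = d"
    using carrier_append_rows[OF mult_carrier_mat[OF assms(1,3)] mult_carrier_mat[OF assms(2,3)]]
    by auto
  show ?thesis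
  proof (rule eq_matI)
    fix i j assume "i < dim_row ((X * S) @\<^sub>r (Z * S))" "j < dim_col ((X * S) @\<^sub>r (Z * S))"
    then have i: "i < r1 + r2" and j: "j < d" using XSZS by auto
    have "row (X @\<^sub>r Z) i = (if i < r1 then row X i else row Z (i - r1))"
      by (rule eq_vecI) (use assms i XZ in \<open>auto simp: index_append_rows\<close>)
    then show "((X @\<^sub>r Z) * S) $$ (i, j) = ((X * S) @\<^sub>r (Z * S)) $$ (i, j)"
      using assms i j XZ by (subst index_append_rows[of _ r1 d _ r2]) auto
  qed (use assms XZ XSZS in auto)
qed

lemma four_block_mat_mult_append_rows:
  assumes "A \<in> carrier_mat r1 c1" "B \<in> carrier_mat r1 c2"
    and "C \<in> carrier_mat r2 c1" "D \<in> carrier_mat r2 c2"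
    and "X \<in> carrier_mat c1 c" "Z \<in> carrier_mat c2 c"
  shows "four_block_mat A B C D * (X @\<^sub>r Z) = (A * X + B * Z) @\<^sub>r (C * X + D * Z)"
proof -
  have "dim_row X = c1" "dim_row Z = c2" using assms by auto
  then have "four_block_mat A B C D * (X @\<^sub>r Z) =
      four_block_mat (A * X + B * Z) (A * 0\<^sub>m c1 0 + B * 0\<^sub>m c2 0)
        (C * X + D * Z) (C * 0\<^sub>m c1 0 + D * 0\<^sub>m c2 0)"
    unfolding append_rows_def by (simp only:) (rule mult_four_block_mat, use assms in auto)
  also have "A * 0\<^sub>m c1 0 + B * 0\<^sub>m c2 0 = 0\<^sub>m r1 0" using assms by auto
  also have "C * 0\<^sub>m c1 0 + D * 0\<^sub>m c2 0 = 0\<^sub>m r2 0" using assms by auto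
  finally show ?thesis unfolding append_rows_def using assms by simp
qed

lemma invertible_mat_upper_unitriangular:
  fixes A :: "'a :: field mat"
  assumes A: "A \<in> carrier_mat n n" and "upper_triangular A" and diag: "\<And>i. i < n \<Longrightarrow> A $$ (i, i) = 1"
  shows "invertible_mat A"
proof -
  have "det A = (\<Prod>i = 0..<n. A $$ (i, i))"
    using det_upper_triangular[OF assms(2) A] A by (simp add: prod_list_diag_prod)
  also have "\<dots> = 1" using diag by simp
  finally have "A \<in> Units (ring_mat TYPE('a) n ())"
    using det_non_zero_imp_unit[OF A] by simp
  then obtain B where "B \<in> carrier_mat n n" "B * A = 1\<^sub>m n" "A * B = 1\<^sub>m n"
    unfolding Units_def ring_mat_def by auto
  then show ?thesis
    using A unfolding invertible_mat_def inverts_mat_def by auto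
qed

lemma intertwines_imp_eq_conj:
  fixes M :: "'a :: semiring_1 mat"
  assumes M: "M \<in> carrier_mat n n" and \<Psi>: "\<Psi> \<in> carrier_mat n n"
    and intertwines: "M * \<Psi> = \<Psi> * S"
    and right_inv: "\<Psi> * \<Psi>i = 1\<^sub>m n" and left_inv: "\<Psi>i * \<Psi> = 1\<^sub>m n"
  shows "M = \<Psi> * S * \<Psi>i"
proof -
  have \<Psi>i: "\<Psi>i \<in> carrier_mat n n"
    using arg_cong[OF left_inv, of dim_row] arg_cong[OF right_inv, of dim_col] by auto
  have "M = M * (\<Psi> * \<Psi>i)" by (simp add: right_inv right_mult_one_mat[OF M])
  also have "\<dots> = M * \<Psi> * \<Psi>i" using M \<Psi> \<Psi>i by (simp add: assoc_mult_mat)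
  finally show ?thesis by (simp add: intertwines)
qed

lemma mult_e1_kron_one_index:
  assumes X: "X \<in> carrier_mat r (n * N)" and "N > 0" "i < r" "j < n"
  shows "(X * (e1 N \<otimes>\<^sub>k 1\<^sub>m n)) $$ (i, j) = X $$ (i, j)"
proof -
  define E where "E = e1 N \<otimes>\<^sub>k 1\<^sub>m n"
  have e1: "e1 N \<in> carrier_mat N 1" unfolding e1_def by simp
  have E: "E \<in> carrier_mat (N * n) (1 * n)"
    unfolding E_def by (rule carrier_kron[OF e1 one_carrier_mat])
  have E_index: "E $$ (k, j) = (if k = j then 1 else 0)" if "k < N * n" for k
    unfolding E_def using index_kron[OF e1 one_carrier_mat that] \<open>j < n\<close> that
    by (auto simp: e1_def div_eq_0_iff less_mult_imp_div_less)
  have "j < n * N" using \<open>N > 0\<close> \<open>j < n\<close> by (cases N) auto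
  have "(X * E) $$ (i, j) = (\<Sum>k<n * N. X $$ (i, k) * E $$ (k, j))"
    using X E assms by (simp add: scalar_prod_def atLeast0LessThan mult.commute)
  also have "\<dots> = (\<Sum>k<n * N. if k = j then X $$ (i, k) else 0)"
    by (rule sum.cong) (auto simp: E_index mult.commute)
  also have "\<dots> = X $$ (i, j)" using \<open>j < n * N\<close> by simp
  finally show ?thesis unfolding E_def .
qed

lemma carrier_shift_kron_one: "shiftP N \<otimes>\<^sub>k 1\<^sub>m n \<in> carrier_mat (n * N) (n * N)"
  using carrier_kron[of "shiftP N" N N "1\<^sub>m n" n n] by (simp add: shiftP_def mult.commute)

lemma carrier_Zmat: "Zmat n N \<in> carrier_mat (n * (N - 1)) (n * N)"
  unfolding Zmat_def by simp

lemma mult_eq_add_mult_pred: "N > 0 \<Longrightarrow> n * N = n + n * (N - 1 :: nat)"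
  by (cases N) auto

lemma carrier_append_rows_Zmat:
  assumes "N > 0" "X \<in> carrier_mat n (n * N)"
  shows "X @\<^sub>r Zmat n N \<in> carrier_mat (n * N) (n * N)"
  using carrier_append_rows[OF assms(2) carrier_Zmat] mult_eq_add_mult_pred[OF assms(1), of n]
  by simp

lemma invertible_mat_append_rows_Zmat:
  assumes "N > 0" and X: "X \<in> carrier_mat n (n * N)" and X_lead: "X * (e1 N \<otimes>\<^sub>k 1\<^sub>m n) = 1\<^sub>m n"
  shows "invertible_mat (X @\<^sub>r Zmat n N)"
proof -
  let ?\<Psi> = "X @\<^sub>r Zmat n N"
  have \<Psi>: "?\<Psi> \<in> carrier_mat (n * N) (n * N)"
    using carrier_append_rows_Zmat[OF \<open>N > 0\<close> X] .
  have X_index: "X $$ (i, j) = (if i = j then 1 else 0)" if "i < n" "j < n" for i j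
    using mult_e1_kron_one_index[OF X \<open>N > 0\<close> that] X_lead that by simp
  have \<Psi>_index: "?\<Psi> $$ (i, j) = (if i = j then 1 else 0)" if "i < n * N" "j < n * N" "j \<le> i" for i j
    using that X_index[of i j] mult_eq_add_mult_pred[OF \<open>N > 0\<close>, of n]
    by (subst index_append_rows[OF X carrier_Zmat]) (auto simp: Zmat_def)
  have "upper_triangular ?\<Psi>"
    using \<Psi> by (intro upper_triangularI) (simp add: \<Psi>_index)
  then show ?thesis
    by (rule invertible_mat_upper_unitriangular[OF \<Psi>]) (simp add: \<Psi>_index)
qed

lemma closed_loop_intertwines:
  assumes "N > 0"
    and A: "A \<in> carrier_mat n n" and B: "B \<in> carrier_mat n m"
    and X: "X \<in> carrier_mat n (n * N)" and U: "U \<in> carrier_mat m (n * N)"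
    and K: "K \<in> carrier_mat m n" and H: "H \<in> carrier_mat m (n * (N - 1))"
    and G: "G \<in> carrier_mat (n * (N - 1)) n" and F: "F \<in> carrier_mat (n * (N - 1)) (n * (N - 1))"
    and dynamics: "A * X + B * U = X * (shiftP N \<otimes>\<^sub>k 1\<^sub>m n)"
    and gains: "four_block_mat K H G F * (X @\<^sub>r Zmat n N) = U @\<^sub>r Vmat n N"
  shows "four_block_mat (A + B * K) (B * H) G F * (X @\<^sub>r Zmat n N)
    = (X @\<^sub>r Zmat n N) * (shiftP N \<otimes>\<^sub>k 1\<^sub>m n)"
proof -
  let ?Z = "Zmat n N" and ?S = "shiftP N \<otimes>\<^sub>k 1\<^sub>m n"
  note nN = mult_eq_add_mult_pred[OF \<open>N > 0\<close>, of n]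
  have X': "X \<in> carrier_mat n (n + n * (N - 1))" and Z': "?Z \<in> carrier_mat (n * (N - 1)) (n + n * (N - 1))"
    using X carrier_Zmat[of n N] by (simp_all only: nN)
  have V: "Vmat n N \<in> carrier_mat (n * (N - 1)) (n * N)"
    unfolding Vmat_def using carrier_Zmat carrier_shift_kron_one by (rule mult_carrier_mat)
  have "(K * X + H * ?Z) @\<^sub>r (G * X + F * ?Z) = U @\<^sub>r Vmat n N"
    using gains four_block_mat_mult_append_rows[OF K H G F X' Z'] by simp
  then have "K * X + H * ?Z = U \<and> G * X + F * ?Z = Vmat n N"
    by (rule append_rows_inject[rotated 4]) (use K H G F X carrier_Zmat[of n N] U V in auto)
  then have KH: "K * X + H * ?Z = U" and GF: "G * X + F * ?Z = ?Z * ?S"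
    unfolding Vmat_def by auto
  have "(A + B * K) * X + B * H * ?Z = A * X + B * (K * X) + B * (H * ?Z)"
    using A B K H X carrier_Zmat[of n N] by (simp add: add_mult_distrib_mat assoc_mult_mat)
  also have "\<dots> = A * X + (B * (K * X) + B * (H * ?Z))"
    using A B K H X carrier_Zmat[of n N] by (intro assoc_add_mat) auto
  also have "\<dots> = A * X + B * (K * X + H * ?Z)"
    using B K H X carrier_Zmat[of n N] by (subst mult_add_distrib_mat) auto
  also have "\<dots> = X * ?S" using KH dynamics by simp
  finally have "(A + B * K) * X + B * H * ?Z = X * ?S" .
  moreover have "four_block_mat (A + B * K) (B * H) G F * (X @\<^sub>r ?Z)
      = ((A + B * K) * X + B * H * ?Z) @\<^sub>r (G * X + F * ?Z)"
    using A B K H by (intro four_block_mat_mult_append_rows[OF _ _ G F X' Z']) auto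
  ultimately show ?thesis
    using GF append_rows_mult[OF X carrier_Zmat carrier_shift_kron_one] by simp
qed

theorem mainTheorem2:
  fixes A B X U :: "real mat" and n m N :: nat
  assumes "N \<ge> 2"
    and "A \<in> carrier_mat n n" and "B \<in> carrier_mat n m"
    and "X \<in> carrier_mat n (n * N)" and "U \<in> carrier_mat m (n * N)"
    and "A * X + B * U = X * (shiftP N \<otimes>\<^sub>k 1\<^sub>m n)"
    and "X * (e1 N \<otimes>\<^sub>k 1\<^sub>m n) = 1\<^sub>m n"
  shows "invertible_mat (X @\<^sub>r Zmat n N) \<and>
    (\<forall>K H G F. K \<in> carrier_mat m n \<and> H \<in> carrier_mat m (n * (N - 1)) \<and>
        G \<in> carrier_mat (n * (N - 1)) n \<and> F \<in> carrier_mat (n * (N - 1)) (n * (N - 1)) \<and>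
        four_block_mat K H G F * (X @\<^sub>r Zmat n N) = U @\<^sub>r Vmat n N \<longrightarrow>
      (\<forall>\<Psi>i. (X @\<^sub>r Zmat n N) * \<Psi>i = 1\<^sub>m (n * N) \<and> \<Psi>i * (X @\<^sub>r Zmat n N) = 1\<^sub>m (n * N) \<longrightarrow>
        four_block_mat (A + B * K) (B * H) G F = (X @\<^sub>r Zmat n N) * (shiftP N \<otimes>\<^sub>k 1\<^sub>m n) * \<Psi>i))"
proof (intro conjI allI impI; (elim conjE)?)
  have "N > 0" using \<open>N \<ge> 2\<close> by simp
  show "invertible_mat (X @\<^sub>r Zmat n N)"
    using invertible_mat_append_rows_Zmat[OF \<open>N > 0\<close> assms(4,7)] .
  fix K H G F \<Psi>i
  assume K: "K \<in> carrier_mat m n" and H: "H \<in> carrier_mat m (n * (N - 1))"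
    and G: "G \<in> carrier_mat (n * (N - 1)) n" and F: "F \<in> carrier_mat (n * (N - 1)) (n * (N - 1))"
    and gains: "four_block_mat K H G F * (X @\<^sub>r Zmat n N) = U @\<^sub>r Vmat n N"
    and inverse: "(X @\<^sub>r Zmat n N) * \<Psi>i = 1\<^sub>m (n * N)" "\<Psi>i * (X @\<^sub>r Zmat n N) = 1\<^sub>m (n * N)"
  have "four_block_mat (A + B * K) (B * H) G F \<in> carrier_mat (n * N) (n * N)"
    using assms(2,3) K H G F by (auto simp: mult_eq_add_mult_pred[OF \<open>N > 0\<close>])
  then show "four_block_mat (A + B * K) (B * H) G F = (X @\<^sub>r Zmat n N) * (shiftP N \<otimes>\<^sub>k 1\<^sub>m n) * \<Psi>i"
    using intertwines_imp_eq_conj carrier_append_rows_Zmat[OF \<open>N > 0\<close> assms(4)] inverse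
      closed_loop_intertwines[OF \<open>N > 0\<close> assms(2-5) K H G F assms(6) gains] by blast
qed

end
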